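(* Let $n\ge 2$. Every matrix in the interior of the cone $\mathcal{CP}_n$ (interior taken in the space $\mathcal S_n$ of real symmetric $n\times n$ matrices) has infinitely many CP factorizations.
   Context: A symmetric $n\times n$ matrix $A$ is completely positive if $A=BB^T$ for some entrywise nonnegative $n\times k$ matrix $B$; such an equality is a CP factorization of $A$. $\mathcal{CP}_n$ denotes the convex cone of $n\times n$ completely positive matrices. Only CP factorizations in which the columns of $B$ are pairwise linearly independent are considered, and two CP factorizations $A=BB^T=CC^T$ are considered equal if $C=BP$ for a permutation matrix $P$. (Known fact, which may be used: the interior of $\mathcal{CP}_n$ consists exactly of the nonsingular matrices $A$ having a CP factorization $A=BB^T$ in which at least one column of $B$ is entrywise positive.) *)

theory Defs
  imports "HOL-Analysis.Analysis" "HOL-Library.Multiset"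
begin

text \<open>An n x k matrix B is represented by the list of its k columns (each in real^n);
  B B^T is then the sum of the outer products of the columns.\<close>

definition outer :: "real^'n \<Rightarrow> real^'n^'n" where
  "outer b = (\<chi> i j. b$i * b$j)"

definition gram :: "(real^'n) list \<Rightarrow> real^'n^'n" where
  "gram cols = sum_list (map outer cols)"

definition nonneg_vec :: "real^'n \<Rightarrow> bool" where
  "nonneg_vec b \<longleftrightarrow> (\<forall>i. b$i \<ge> 0)"

definition lin_indep_pair :: "real^'n \<Rightarrow> real^'n \<Rightarrow> bool" where
  "lin_indep_pair u v \<longleftrightarrow> (\<forall>a b::real. a *\<^sub>R u + b *\<^sub>R v = 0 \<longrightarrow> a = 0 \<and> b = 0)"

definition cp_factorization :: "real^'n^'n \<Rightarrow> (real^'n) list \<Rightarrow> bool" where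
  "cp_factorization A cols \<longleftrightarrow>
     (\<forall>b\<in>set cols. nonneg_vec b) \<and>
     (\<forall>i<length cols. \<forall>j<length cols. i \<noteq> j \<longrightarrow> lin_indep_pair (cols!i) (cols!j)) \<and>
     A = gram cols"

definition sym_mat :: "real^'n^'n \<Rightarrow> bool" where
  "sym_mat A \<longleftrightarrow> transpose A = A"

definition CP :: "(real^'n^'n) set" where
  "CP = {A. \<exists>cols. (\<forall>b\<in>set cols. nonneg_vec b) \<and> A = gram cols}"

definition Sym :: "(real^'n^'n) set" where
  "Sym = {A. sym_mat A}"

definition CP_interior :: "(real^'n^'n) set" where
  "CP_interior = (top_of_set Sym) interior_of CP"

text \<open>Two factorizations are identified iff their column lists are permutations of each
  other, i.e. have the same multiset of columns.\<close>
definition cp_factorizations :: "real^'n^'n \<Rightarrow> (real^'n) multiset set" where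
  "cp_factorizations A = {mset cols | cols. cp_factorization A cols}"

end

theory Submission
  imports Defs
begin

text \<open>If A lies in the relative interior of the cone, then for every nonzero nonnegative u the
  matrix A - d u u^T is still completely positive for small d > 0; adding the column sqrt d u to a
  factorization of it gives a factorization of A with a column in direction u (after merging
  parallel columns). For n \<ge> 2 the directions e_i + t e_j, t > 0, are pairwise different, so
  no finite set of factorizations, each with finitely many columns, can supply all of them.\<close>

lemma outer_scaleR: "outer (r *\<^sub>R v) = r\<^sup>2 *\<^sub>R outer (v::real^'n)"
  by (simp add: outer_def vec_eq_iff power2_eq_square algebra_simps)

lemma sym_mat_iff: "sym_mat (X::real^'n^'n) \<longleftrightarrow> (\<forall>i j. X$i$j = X$j$i)"
  unfolding sym_mat_def transpose_def by (auto simp: vec_eq_iff)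

lemma sym_mat_outer: "sym_mat (outer v)"
  by (simp add: sym_mat_iff outer_def mult.commute)

lemma gram_Cons: "gram (b # L) = outer b + gram L"
  by (simp add: gram_def)

lemma gram_append: "gram (L @ M) = gram L + gram M"
  by (simp add: gram_def)

lemma lin_indep_pair_commute: "lin_indep_pair u v \<longleftrightarrow> lin_indep_pair v u"
  unfolding lin_indep_pair_def by (metis add.commute)

lemma not_lin_indep_pair_self: "\<not> lin_indep_pair b b"
  unfolding lin_indep_pair_def by (metis add.right_inverse scaleR_minus_left scaleR_one zero_neq_one)

lemma lin_indep_pair_scaleR_left:
  assumes "k \<noteq> 0" "lin_indep_pair u v"
  shows "lin_indep_pair (k *\<^sub>R u) v"
  using assms unfolding lin_indep_pair_def by (metis mult_eq_0_iff scaleR_scaleR)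

lemma nonneg_dependent_imp_pos_multiple:
  fixes b c :: "real^'n"
  assumes "nonneg_vec b" "nonneg_vec c" "b \<noteq> 0" "c \<noteq> 0" "\<not> lin_indep_pair b c"
  obtains r where "r > 0" "c = r *\<^sub>R b"
proof -
  obtain a d where ad: "a *\<^sub>R b + d *\<^sub>R c = 0" "a \<noteq> 0 \<or> d \<noteq> 0"
    using assms(5) unfolding lin_indep_pair_def by blast
  have "d \<noteq> 0" using ad assms(3) by auto
  define r where "r = - a / d"
  have "d *\<^sub>R c = - (a *\<^sub>R b)" using ad(1) by (simp add: eq_neg_iff_add_eq_0 add.commute)
  then have "(1 / d) *\<^sub>R (d *\<^sub>R c) = (1 / d) *\<^sub>R - (a *\<^sub>R b)" by simp
  then have c_eq: "c = r *\<^sub>R b" using \<open>d \<noteq> 0\<close> by (simp add: r_def)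
  obtain i where "b$i \<noteq> 0" using assms(3) by (metis vec_eq_iff zero_index)
  with assms(1) have "b$i > 0" unfolding nonneg_vec_def by (metis less_eq_real_def)
  moreover have "r * b$i \<ge> 0"
    using assms(2) unfolding nonneg_vec_def c_eq by simp
  ultimately have "r \<ge> 0" by (simp add: zero_le_mult_iff)
  moreover have "r \<noteq> 0" using c_eq assms(4) by auto
  ultimately have "r > 0" by simp
  then show thesis using c_eq by (rule that)
qed

text \<open>Finite sets of columns as they occur in a CP factorization; by the convention that
  permuted factorizations are equal, a factorization is determined by such a set.\<close>

definition cp_column_set :: "(real^'n) set \<Rightarrow> bool" where
  "cp_column_set S \<longleftrightarrow> finite S \<and> (\<forall>x\<in>S. nonneg_vec x \<and> x \<noteq> 0)
     \<and> (\<forall>x\<in>S. \<forall>y\<in>S. x \<noteq> y \<longrightarrow> lin_indep_pair x y)"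

definition has_direction :: "(real^'n) set \<Rightarrow> real^'n \<Rightarrow> bool" where
  "has_direction S v \<longleftrightarrow> (\<exists>c\<in>S. \<exists>r>0. c = r *\<^sub>R v)"

lemma has_direction_scaleR:
  assumes "has_direction S c" "r > 0" "c = r *\<^sub>R b"
  shows "has_direction S b"
  using assms unfolding has_direction_def by (metis mult_pos_pos scaleR_scaleR)

lemma has_direction_trans:
  assumes "\<forall>c\<in>S. has_direction S' c" "has_direction S v"
  shows "has_direction S' v"
  using assms has_direction_scaleR unfolding has_direction_def[of S] by blast

lemma has_direction_self: "v \<in> S \<Longrightarrow> has_direction S v"
  unfolding has_direction_def by (metis scaleR_one zero_less_one)

lemma cp_column_set_rescale:
  assumes S: "cp_column_set S" and "c \<in> S" "k > 0"
  shows "cp_column_set (insert (k *\<^sub>R c) (S - {c}))" "k *\<^sub>R c \<notin> S - {c}"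
proof -
  have pw: "\<And>x y. x \<in> S \<Longrightarrow> y \<in> S \<Longrightarrow> x \<noteq> y \<Longrightarrow> lin_indep_pair x y"
    and nn: "\<And>x. x \<in> S \<Longrightarrow> nonneg_vec x \<and> x \<noteq> 0"
    using S unfolding cp_column_set_def by auto
  have indep: "lin_indep_pair (k *\<^sub>R c) y \<and> lin_indep_pair y (k *\<^sub>R c)" if "y \<in> S" "y \<noteq> c" for y
  proof -
    have "lin_indep_pair (k *\<^sub>R c) y"
      using lin_indep_pair_scaleR_left[OF _ pw[OF assms(2) that(1)]] that(2) assms(3) by auto
    then show ?thesis using lin_indep_pair_commute by blast
  qed
  have "nonneg_vec (k *\<^sub>R c)" "k *\<^sub>R c \<noteq> 0"
    using nn[OF assms(2)] assms(3) unfolding nonneg_vec_def by auto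
  with S indep show "cp_column_set (insert (k *\<^sub>R c) (S - {c}))"
    unfolding cp_column_set_def by auto
  show "k *\<^sub>R c \<notin> S - {c}"
    using indep[of "k *\<^sub>R c"] not_lin_indep_pair_self by blast
qed

text \<open>A column b parallel to a column c = r b is absorbed into the single column
  sqrt (1 + r^2) b, since outer is quadratic.\<close>

lemma cp_column_set_merge_parallel:
  assumes S: "cp_column_set S" and "c \<in> S" "r > 0" "c = r *\<^sub>R b"
  defines "S' \<equiv> insert (sqrt (1 + r\<^sup>2) *\<^sub>R b) (S - {c})"
  shows "cp_column_set S'" "sum outer S' = outer b + sum outer S"
    "has_direction S' b" "\<forall>x\<in>S. has_direction S' x"
proof -
  define s where "s = sqrt (1 + r\<^sup>2)"
  have "s > 0" unfolding s_def by (simp add: add_pos_nonneg)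
  then have "s / r > 0" using assms(3) by simp
  have s_b: "s *\<^sub>R b = (s / r) *\<^sub>R c" using assms(3,4) by simp
  have S'_eq: "S' = insert ((s / r) *\<^sub>R c) (S - {c})" unfolding S'_def s_def[symmetric] s_b ..
  show "cp_column_set S'"
    unfolding S'_eq using cp_column_set_rescale(1)[OF S assms(2) \<open>s / r > 0\<close>] .
  have "sum outer S' = outer (s *\<^sub>R b) + (sum outer S - outer c)"
    using cp_column_set_rescale(2)[OF S assms(2) \<open>s / r > 0\<close>] S assms(2)
    unfolding S'_eq s_b cp_column_set_def by (simp add: sum_diff1)
  also have "\<dots> = outer b + sum outer S"
  proof -
    have "s\<^sup>2 = 1 + r\<^sup>2" unfolding s_def by (simp add: add_nonneg_nonneg)
    then have "outer (s *\<^sub>R b) = outer b + outer c"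
      by (simp add: outer_scaleR assms(4) scaleR_add_left)
    then show ?thesis by simp
  qed
  finally show "sum outer S' = outer b + sum outer S" .
  show "has_direction S' b"
    using \<open>s > 0\<close> unfolding S'_def s_def[symmetric] has_direction_def by blast
  have "has_direction S' c"
    using \<open>s / r > 0\<close> unfolding S'_eq has_direction_def by blast
  moreover have "has_direction S' x" if "x \<in> S - {c}" for x
    using that by (intro has_direction_self) (simp add: S'_def)
  ultimately show "\<forall>x\<in>S. has_direction S' x" by blast
qed

lemma cp_column_set_insert:
  assumes S: "cp_column_set S" and "nonneg_vec b" "b \<noteq> 0"
  obtains S' where "cp_column_set S'" "sum outer S' = outer b + sum outer S"
    "has_direction S' b" "\<forall>x\<in>S. has_direction S' x"
proof (cases "\<exists>c\<in>S. \<not> lin_indep_pair b c")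
  case True
  then obtain c where "c \<in> S" "\<not> lin_indep_pair b c" by blast
  moreover from this S have "nonneg_vec c" "c \<noteq> 0" unfolding cp_column_set_def by auto
  ultimately obtain r where "r > 0" "c = r *\<^sub>R b"
    using nonneg_dependent_imp_pos_multiple[OF assms(2) _ assms(3)] by blast
  show thesis
    using cp_column_set_merge_parallel[OF S \<open>c \<in> S\<close> \<open>r > 0\<close> \<open>c = r *\<^sub>R b\<close>] by (rule that)
next
  case False
  then have "b \<notin> S" using not_lin_indep_pair_self by blast
  have "\<forall>c\<in>S. lin_indep_pair b c \<and> lin_indep_pair c b"
    using False lin_indep_pair_commute by blast
  with S assms(2,3) have "cp_column_set (insert b S)"
    unfolding cp_column_set_def by auto
  moreover have "sum outer (insert b S) = outer b + sum outer S"
    using S \<open>b \<notin> S\<close> unfolding cp_column_set_def by simp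
  ultimately show thesis
    by (rule that) (auto intro: has_direction_self)
qed

lemma gram_eq_sum_cp_column_set:
  assumes "\<forall>b\<in>set L. nonneg_vec b"
  obtains S where "cp_column_set S" "sum outer S = gram L"
    "\<forall>b\<in>set L. b \<noteq> 0 \<longrightarrow> has_direction S b"
  using assms
proof (induction L arbitrary: thesis)
  case Nil
  show ?case by (rule Nil.prems(1)[of "{}"]) (auto simp: cp_column_set_def gram_def)
next
  case (Cons b L)
  then obtain S where S: "cp_column_set S" "sum outer S = gram L"
    "\<forall>x\<in>set L. x \<noteq> 0 \<longrightarrow> has_direction S x"
    by auto
  show ?case
  proof (cases "b = 0")
    case True
    then have "sum outer S = gram (b # L)" using S(2) by (simp add: gram_Cons outer_def vec_eq_iff)
    with S(1,3) True show ?thesis by (intro Cons.prems(1)[of S]) auto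
  next
    case False
    obtain S' where S': "cp_column_set S'" "sum outer S' = outer b + sum outer S"
      "has_direction S' b" "\<forall>x\<in>S. has_direction S' x"
      using cp_column_set_insert[OF S(1) _ False] Cons.prems(2) by auto
    show ?thesis
    proof (rule Cons.prems(1)[OF S'(1)])
      show "sum outer S' = gram (b # L)" using S'(2) S(2) by (simp add: gram_Cons)
      show "\<forall>x\<in>set (b # L). x \<noteq> 0 \<longrightarrow> has_direction S' x"
        using S(3) S'(3) has_direction_trans[OF S'(4)] by simp
    qed
  qed
qed

lemma cp_factorization_of_cp_column_set:
  assumes "cp_column_set S"
  obtains xs where "cp_factorization (sum outer S) xs" "set xs = S"
proof -
  have "finite S" using assms unfolding cp_column_set_def by blast
  then obtain xs where xs: "set xs = S" "distinct xs" using finite_distinct_list by blast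
  have "lin_indep_pair (xs ! i) (xs ! j)"
    if "i < length xs" "j < length xs" "i \<noteq> j" for i j
  proof -
    have "xs ! i \<noteq> xs ! j" using xs(2) that by (simp add: nth_eq_iff_index_eq)
    moreover have "xs ! i \<in> S" "xs ! j \<in> S" using xs(1) that by auto
    ultimately show ?thesis using assms unfolding cp_column_set_def by blast
  qed
  moreover have "sum outer S = gram xs"
    using xs by (simp add: gram_def sum_list_distinct_conv_sum_set)
  ultimately have "cp_factorization (sum outer S) xs"
    using assms xs(1) unfolding cp_column_set_def cp_factorization_def by blast
  then show thesis using xs(1) by (rule that)
qed

lemma cp_factorization_with_direction:
  assumes "\<forall>b\<in>set L. nonneg_vec b" "v \<in> set L" "v \<noteq> 0"
  shows "\<exists>m\<in>cp_factorizations (gram L). has_direction (set_mset m) v"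
proof -
  obtain S where S: "cp_column_set S" "sum outer S = gram L"
    "\<forall>b\<in>set L. b \<noteq> 0 \<longrightarrow> has_direction S b"
    using gram_eq_sum_cp_column_set assms(1) by blast
  obtain xs where "cp_factorization (gram L) xs" "set xs = S"
    using cp_factorization_of_cp_column_set[OF S(1)] S(2) by metis
  then show ?thesis
    using S(3) assms(2,3) unfolding cp_factorizations_def by fastforce
qed

lemma CP_interior_diff_outer:
  assumes "A \<in> CP_interior"
  obtains d where "d > 0" "A - d *\<^sub>R outer u \<in> CP"
proof -
  obtain T where T: "open T" "A \<in> Sym \<inter> T" "Sym \<inter> T \<subseteq> CP"
    using assms unfolding CP_interior_def interior_of_def openin_open by blast
  then obtain e where "e > 0" "ball A e \<subseteq> T" using open_contains_ball by blast
  define N where "N = norm (outer u)"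
  have "N \<ge> 0" unfolding N_def by simp
  define d where "d = e / (2 * (N + 1))"
  have "d > 0" using \<open>e > 0\<close> \<open>N \<ge> 0\<close> unfolding d_def by simp
  have "d * N \<le> d * (N + 1)" using \<open>d > 0\<close> by simp
  also have "\<dots> = e / 2" unfolding d_def using \<open>N \<ge> 0\<close> by (simp add: field_split_simps)
  finally have "d * norm (outer u) < e" using \<open>e > 0\<close> unfolding N_def by simp
  with \<open>d > 0\<close> have "A - d *\<^sub>R outer u \<in> T"
    using \<open>ball A e \<subseteq> T\<close> by (auto simp: dist_norm)
  moreover have "A - d *\<^sub>R outer u \<in> Sym"
    using T(2) sym_mat_outer[of u] by (simp add: Sym_def sym_mat_iff)
  ultimately show thesis using that \<open>d > 0\<close> T(3) by blast
qed

lemma CP_interior_has_direction: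
  assumes "A \<in> CP_interior" "nonneg_vec u" "u \<noteq> 0"
  shows "\<exists>m\<in>cp_factorizations A. has_direction (set_mset m) u"
proof -
  obtain d where "d > 0" "A - d *\<^sub>R outer u \<in> CP"
    using CP_interior_diff_outer[OF assms(1)] .
  then obtain L where L: "\<forall>b\<in>set L. nonneg_vec b" "A - d *\<^sub>R outer u = gram L"
    unfolding CP_def by blast
  define v where "v = sqrt d *\<^sub>R u"
  have "sqrt d > 0" using \<open>d > 0\<close> by simp
  have "outer v = d *\<^sub>R outer u" using \<open>d > 0\<close> by (simp add: v_def outer_scaleR)
  then have "A = gram (L @ [v])"
    using L(2) by (simp add: gram_append gram_def) (metis diff_add_cancel)
  moreover have "\<forall>b\<in>set (L @ [v]). nonneg_vec b" "v \<noteq> 0"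
    using L(1) assms(2,3) \<open>sqrt d > 0\<close> by (auto simp: v_def nonneg_vec_def)
  ultimately obtain m where "m \<in> cp_factorizations A" "has_direction (set_mset m) v"
    using cp_factorization_with_direction[of "L @ [v]" v] by auto
  then show ?thesis using has_direction_scaleR[OF _ \<open>sqrt d > 0\<close> v_def] by blast
qed

theorem corollary3p3:
  fixes A :: "real^'n^'n"
  assumes "CARD('n) \<ge> 2"
    and "A \<in> CP_interior"
  shows "infinite (cp_factorizations A)"
proof
  assume "finite (cp_factorizations A)"
  then have fin_cols: "finite (\<Union>m\<in>cp_factorizations A. set_mset m)" by auto
  obtain i j :: 'n where "i \<noteq> j" using assms(1) by (meson card_2_iff' ex_card)
  define u :: "real \<Rightarrow> real^'n" where "u t = (\<chi> k. if k = i then 1 else if k = j then t else 0)" for t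
  have "{0<..} \<subseteq> (\<lambda>c. c$j / c$i) ` (\<Union>m\<in>cp_factorizations A. set_mset m)"
  proof
    fix t :: real assume "t \<in> {0<..}"
    then have "nonneg_vec (u t)" "u t \<noteq> 0"
      by (auto simp: u_def nonneg_vec_def vec_eq_iff)
    then obtain m c r where "m \<in> cp_factorizations A" "c \<in># m" "r > 0" "c = r *\<^sub>R u t"
      using CP_interior_has_direction[OF assms(2)] unfolding has_direction_def by blast
    moreover from this have "c$j / c$i = t" using \<open>i \<noteq> j\<close> by (simp add: u_def)
    ultimately show "t \<in> (\<lambda>c. c$j / c$i) ` (\<Union>m\<in>cp_factorizations A. set_mset m)" by force
  qed
  then have "finite {0::real<..}" using fin_cols finite_subset by blast
  then show False using infinite_Ioi by blast
qed

end
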